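(* Let $0\le\lambda<\gamma\le\delta$ and let $\mathfrak{f}=\mathfrak{s}+\overline{\mathfrak{t}}\in\mathcal{R}_H^0(\gamma,\delta,\lambda)$. Let $$ps(r)=(\delta+2\gamma-\lambda)r^2+(-2\delta-4\gamma+2\lambda)r+\delta+\gamma.$$ Then $ps(r)=0$ has a unique real root $r_s$ in $(0,1)$, and $\mathfrak{f}$ is fully starlike in $|z|<r_s$.
   Context: Let $\mathcal{U}=\{z\in\mathbb{C}:|z|<1\}$. $\mathcal{H}^0$ denotes the class of complex-valued harmonic functions $\mathfrak{f}=\mathfrak{s}+\overline{\mathfrak{t}}$ on $\mathcal{U}$, where $\mathfrak{s}(z)=z+\sum_{m\ge2}a_mz^m$ and $\mathfrak{t}(z)=\sum_{m\ge2}b_mz^m$ are analytic in $\mathcal{U}$. For real $0\le\lambda<\gamma\le\delta$, $\mathcal{R}_H^0(\gamma,\delta,\lambda)$ is the class of $\mathfrak{f}=\mathfrak{s}+\overline{\mathfrak{t}}\in\mathcal{H}^0$ such that for all $z\in\mathcal{U}$, $\mathrm{Re}\left[\gamma\mathfrak{s}'(z)+\delta z\mathfrak{s}''(z)+\frac{\delta-\gamma}{2}z^2\mathfrak{s}'''(z)-\lambda\right]>\left|\gamma\mathfrak{t}'(z)+\delta z\mathfrak{t}''(z)+\frac{\delta-\gamma}{2}z^2\mathfrak{t}'''(z)\right|$. A harmonic function $\mathfrak{f}$ with $\mathfrak{f}(0)=0$ is fully starlike in the disk $|z|<R$ if it maps every circle $|z|=\rho$, $0<\rho<R$, in a one-to-one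 manner onto a curve that bounds a domain starlike with respect to the origin. *)

theory Defs
  imports "HOL-Analysis.Analysis"
begin

definition in_RH0 :: "real \<Rightarrow> real \<Rightarrow> real \<Rightarrow> (complex \<Rightarrow> complex) \<Rightarrow> (complex \<Rightarrow> complex) \<Rightarrow> bool" where
  "in_RH0 \<gamma> \<delta> lam s t \<longleftrightarrow>
     s holomorphic_on ball 0 1 \<and> t holomorphic_on ball 0 1 \<and>
     s 0 = 0 \<and> deriv s 0 = 1 \<and> t 0 = 0 \<and> deriv t 0 = 0 \<and>
     (\<forall>z\<in>ball 0 1.
        Re (of_real \<gamma> * deriv s z + of_real \<delta> * z * (deriv ^^ 2) s z
            + of_real ((\<delta> - \<gamma>) / 2) * z^2 * (deriv ^^ 3) s z - of_real lam)
        > cmod (of_real \<gamma> * deriv t z + of_real \<delta> * z * (deriv ^^ 2) t z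
            + of_real ((\<delta> - \<gamma>) / 2) * z^2 * (deriv ^^ 3) t z))"

definition fully_starlike_in :: "(complex \<Rightarrow> complex) \<Rightarrow> real \<Rightarrow> bool" where
  "fully_starlike_in f R \<longleftrightarrow> f 0 = 0 \<and>
     (\<forall>\<rho>. 0 < \<rho> \<and> \<rho> < R \<longrightarrow>
        inj_on f (sphere 0 \<rho>) \<and>
        (\<exists>D. open D \<and> connected D \<and> bounded D \<and> frontier D = f ` sphere 0 \<rho> \<and>
             0 \<in> D \<and> (\<forall>w\<in>D. closed_segment 0 w \<subseteq> D)))"

end

theory Submission
  imports Defs "HOL-Complex_Analysis.Complex_Analysis"
begin

text \<open>
  Write \<open>s = z + \<Sum> a\<^sub>m z\<^sup>m\<close> and \<open>t = \<Sum> b\<^sub>m z\<^sup>m\<close>. The operator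
  \<open>L g = \<gamma> g' + \<delta> z g'' + (\<delta> - \<gamma>)/2 z\<^sup>2 g'''\<close> maps \<open>a\<^sub>m z\<^sup>m\<close> to \<open>w\<^sub>m a\<^sub>m z\<^sup>m\<^sup>-\<^sup>1\<close> with
  \<open>w\<^sub>m = m (\<gamma> + (m - 1) \<delta> + (m - 1)(m - 2)(\<delta> - \<gamma>)/2) \<ge> 2 (\<gamma> + \<delta>)\<close>. Rotating \<open>t\<close> by a
  unimodular \<open>e\<close> that aligns \<open>a\<^sub>m\<close> with \<open>e b\<^sub>m\<close> and applying Caratheodory's lemma to
  \<open>L s - \<lambda> + e L t\<close>, which has positive real part, gives \<open>|a\<^sub>m| + |b\<^sub>m| \<le> (\<gamma> - \<lambda>)/(\<gamma> + \<delta>)\<close>.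

  On \<open>|z| = \<rho>\<close> these bounds keep \<open>f = s + conj t\<close> close to \<open>z\<close> and
  \<open>Df = z s' - conj (z t')\<close> close to \<open>f\<close>, so that \<open>Re (f/z) > 0\<close> and \<open>Re (Df/f) > 0\<close> for every
  \<open>\<rho>\<close> below the root \<open>r\<^sub>s\<close> of \<open>ps\<close>. As \<open>Re (Df/f)\<close> is the derivative of \<open>arg f(\<rho> cis \<theta>)\<close>
  in \<open>\<theta>\<close>, the argument increases strictly, and \<open>Re (f/z) > 0\<close> keeps it within \<open>\<pi>/2\<close> of \<open>\<theta>\<close>,
  so it gains exactly \<open>2\<pi>\<close> per turn: every ray from \<open>0\<close> meets the image curve exactly once.
  The radial extension \<open>r u \<mapsto> r f(\<rho> u)\<close> (\<open>|u| = 1\<close>) is then a continuous injection of the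
  plane, and by invariance of domain it maps the unit disk onto an open domain, starlike with
  respect to \<open>0\<close>, whose frontier is the image curve.
\<close>

section \<open>Caratheodory's coefficient bound\<close>

lemma circle_integral_Taylor_coeff:
  fixes P :: "complex \<Rightarrow> complex" and n :: nat and r R :: real
  assumes hol: "P holomorphic_on ball 0 R" and r: "0 < r" "r < R"
  shows "((\<lambda>\<theta>. P (r * cis \<theta>) * cis (- (n * \<theta>))) has_integral
           2 * pi * r ^ n * ((deriv ^^ n) P 0 / fact n)) {0..2*pi}"
proof -
  have "((\<lambda>u. P u / (u - 0) ^ Suc n) has_contour_integral (2 * pi * \<i> / fact n * (deriv ^^ n) P 0))
          (circlepath 0 r)"
    using hol r
    by (intro Cauchy_has_contour_integral_higher_derivative_circlepath
          continuous_on_subset[OF holomorphic_on_imp_continuous_on[OF hol]])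
       (auto intro: holomorphic_on_subset)
  then have "((\<lambda>\<theta>. P (r * cis \<theta>) / (r * cis \<theta>) ^ Suc n * r * \<i> * cis \<theta>) has_integral
               2 * pi * \<i> / fact n * (deriv ^^ n) P 0) {0..2*pi}"
    by (simp add: circlepath_def has_contour_integral_part_circlepath_iff)
  from has_integral_mult_right[OF this, of "r ^ n / \<i>"]
  have "((\<lambda>\<theta>. P (r * cis \<theta>) * inverse (cis \<theta> ^ n)) has_integral
          2 * pi * r ^ n * ((deriv ^^ n) P 0 / fact n)) {0..2*pi}"
    using r by (simp add: field_simps power_mult_distrib cis_neq_zero del: cis_inverse)
  moreover have "inverse (cis \<theta> ^ n) = cis (- (n * \<theta>))" for \<theta> :: real
    by (simp only: Complex.DeMoivre cis_inverse)
  ultimately show ?thesis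
    by simp
qed

lemma circle_integral_negative_Fourier_coeff:
  fixes P :: "complex \<Rightarrow> complex" and n :: nat and r R :: real
  assumes hol: "P holomorphic_on ball 0 R" and r: "0 < r" "r < R" and n: "n \<ge> 1"
  shows "((\<lambda>\<theta>. P (r * cis \<theta>) * cis (n * \<theta>)) has_integral 0) {0..2*pi}"
proof -
  have "((\<lambda>u. P u * u ^ (n - 1)) has_contour_integral 0) (circlepath 0 r)"
    using hol r by (intro Cauchy_theorem_disc_simple[of _ 0 R]) (auto intro!: holomorphic_intros)
  then have integral: "((\<lambda>\<theta>. P (r * cis \<theta>) * (r * cis \<theta>) ^ (n - 1) * r * \<i> * cis \<theta>) has_integral 0)
                         {0..2*pi}"
    by (simp add: circlepath_def has_contour_integral_part_circlepath_iff)
  have integrand: "P (r * cis \<theta>) * (r * cis \<theta>) ^ (n - 1) * r * \<i> * cis \<theta>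
                  = \<i> * r ^ n * (P (r * cis \<theta>) * cis (n * \<theta>))" for \<theta> :: real
  proof -
    have "(r * cis \<theta>) ^ (n - 1) * r * cis \<theta> = (r * cis \<theta>) ^ n"
      using n by (simp add: mult.assoc flip: power_Suc2)
    also have "\<dots> = r ^ n * cis (n * \<theta>)"
      by (simp add: power_mult_distrib Complex.DeMoivre)
    finally have "(r * cis \<theta>) ^ (n - 1) * r * cis \<theta> = r ^ n * cis (n * \<theta>)" .
    then show ?thesis
      by (metis (no_types, lifting) mult.assoc mult.commute mult.left_commute)
  qed
  from has_integral_mult_right[OF integral[unfolded integrand], of "1 / (\<i> * r ^ n)"] show ?thesis
    using r by simp
qed

lemma Caratheodory_coeff_bound:
  fixes P :: "complex \<Rightarrow> complex" and n :: nat
  assumes hol: "P holomorphic_on ball 0 1" and pos: "\<And>z. z \<in> ball 0 1 \<Longrightarrow> 0 < Re (P z)"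
    and n: "n \<ge> 1"
  shows "norm ((deriv ^^ n) P 0 / fact n) \<le> 2 * Re (P 0)"
proof (rule field_le_mult_one_interval)
  fix x :: real
  assume x: "0 < x" "x < 1"
  define r where "r = root n x"
  have r: "0 < r" "r < 1" "r ^ n = x"
    unfolding r_def using x n by (simp_all add: real_root_pow_pos)
  define c where "c = (deriv ^^ n) P 0 / fact n"
  \<comment> \<open>adding the conjugate of the vanishing coefficient of order \<open>- n\<close> replaces \<open>P\<close> by \<open>2 Re P\<close>\<close>
  have combined: "((\<lambda>\<theta>. P (r * cis \<theta>) * cis (- (n * \<theta>)) + cnj (P (r * cis \<theta>) * cis (n * \<theta>)))
          has_integral complex_of_real (2 * pi * r ^ n) * c + cnj 0) {0..2*pi}"
    unfolding c_def
    using circle_integral_Taylor_coeff[OF hol r(1,2)]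
      has_integral_cnj[THEN iffD2, OF circle_integral_negative_Fourier_coeff[OF hol r(1,2) n]]
    by (intro has_integral_add) (simp_all add: o_def)
  have real_part: "P w * cis (- (n * \<theta>)) + cnj (P w * cis (n * \<theta>))
                   = of_real (2 * Re (P w)) * cis (- (n * \<theta>))" for w :: complex and \<theta> :: real
    by (simp add: cis_cnj complex_add_cnj flip: distrib_right)
  have coeff_integral: "((\<lambda>\<theta>. of_real (2 * Re (P (r * cis \<theta>))) * cis (- (n * \<theta>)))
                   has_integral complex_of_real (2 * pi * r ^ n) * c) {0..2*pi}"
    using combined[unfolded real_part] by simp
  have "((\<lambda>\<theta>. Re (P (r * cis \<theta>))) has_integral 2 * pi * Re (P 0)) {0..2*pi}"
    using has_integral_Re[OF circle_integral_Taylor_coeff[OF hol r(1,2), of 0]] by simp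
  from has_integral_mult_right[OF this, of 2]
  have mean: "((\<lambda>\<theta>. 2 * Re (P (r * cis \<theta>))) has_integral 2 * pi * (2 * Re (P 0))) {0..2*pi}"
    by (simp add: mult_ac)
  have on_circle: "0 < Re (P (r * cis \<theta>))" for \<theta>
    using r by (intro pos) (simp add: norm_mult)
  have "norm (complex_of_real (2 * pi * r ^ n) * c) \<le> 2 * pi * (2 * Re (P 0))"
    using has_integral_norm_bound_integral_component[OF coeff_integral mean, of 1] on_circle
    by (simp add: norm_mult less_imp_le)
  also have "norm (complex_of_real (2 * pi * r ^ n) * c) = 2 * pi * (x * norm c)"
    using r x by (simp add: norm_mult)
  finally show "x * norm ((deriv ^^ n) P 0 / fact n) \<le> 2 * Re (P 0)"
    unfolding c_def by simp
qed

lemma exists_unimodular_norm_add: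
  fixes a b :: complex
  shows "\<exists>e. norm e = 1 \<and> norm (a + e * b) = norm a + norm b"
proof (cases "a = 0 \<or> b = 0")
  case True
  then show ?thesis by (intro exI[of _ 1]) auto
next
  case False
  define e where "e = (a * norm b) / (norm a * b)"
  have "a + e * b = a * of_real ((norm a + norm b) / norm a)"
    using False by (simp add: e_def field_simps)
  then have "norm (a + e * b) = norm a * ((norm a + norm b) / norm a)"
    by (simp only: norm_mult norm_of_real) simp
  also have "\<dots> = norm a + norm b"
    using False by simp
  finally have "norm (a + e * b) = norm a + norm b" .
  moreover have "norm e = 1"
    using False by (simp add: e_def norm_divide norm_mult)
  ultimately show ?thesis by blast
qed

lemma Caratheodory_coeff_bound_pair:
  fixes A B :: "complex \<Rightarrow> complex" and n :: nat
  assumes "A holomorphic_on ball 0 1" "B holomorphic_on ball 0 1" "B 0 = 0"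
    and dominated: "\<And>z. z \<in> ball 0 1 \<Longrightarrow> norm (B z) < Re (A z)" and n: "n \<ge> 1"
  shows "norm ((deriv ^^ n) A 0 / fact n) + norm ((deriv ^^ n) B 0 / fact n) \<le> 2 * Re (A 0)"
proof -
  obtain e where e: "norm e = 1"
    "norm ((deriv ^^ n) A 0 / fact n + e * ((deriv ^^ n) B 0 / fact n))
       = norm ((deriv ^^ n) A 0 / fact n) + norm ((deriv ^^ n) B 0 / fact n)"
    using exists_unimodular_norm_add by blast
  define P where "P z = A z + e * B z" for z
  have "P holomorphic_on ball 0 1"
    unfolding P_def using assms by (intro holomorphic_intros)
  moreover have "0 < Re (P z)" if "z \<in> ball 0 1" for z
  proof -
    have "- Re (e * B z) \<le> norm (B z)"
      using abs_Re_le_cmod[of "e * B z"] e(1) by (simp add: norm_mult)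
    then show ?thesis
      using dominated[OF that] by (simp add: P_def)
  qed
  ultimately have "norm ((deriv ^^ n) P 0 / fact n) \<le> 2 * Re (P 0)"
    using Caratheodory_coeff_bound n by blast
  moreover have "(deriv ^^ n) P 0 = (deriv ^^ n) A 0 + e * (deriv ^^ n) B 0"
    unfolding P_def using assms
    by (simp add: higher_deriv_add higher_deriv_cmult holomorphic_intros)
  ultimately show ?thesis
    using e \<open>B 0 = 0\<close> by (simp add: P_def add_divide_distrib)
qed

section \<open>Coefficient bounds for the class R_H^0\<close>

definition rh_operator :: "real \<Rightarrow> real \<Rightarrow> (complex \<Rightarrow> complex) \<Rightarrow> complex \<Rightarrow> complex" where
  "rh_operator \<gamma> \<delta> g z = of_real \<gamma> * deriv g z + of_real \<delta> * z * (deriv ^^ 2) g z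
     + of_real ((\<delta> - \<gamma>) / 2) * z^2 * (deriv ^^ 3) g z"

definition rh_weight :: "real \<Rightarrow> real \<Rightarrow> nat \<Rightarrow> real" where
  "rh_weight \<gamma> \<delta> m = m * (\<gamma> + (real m - 1) * \<delta> + (real m - 1) * (real m - 2) * (\<delta> - \<gamma>) / 2)"

lemma higher_deriv_id_mult_0:
  assumes "h analytic_on {0}"
  shows "(deriv ^^ k) (\<lambda>z. z * h z) 0 = of_nat k * (deriv ^^ (k - 1)) h 0"
proof (cases k)
  case (Suc j)
  have "(deriv ^^ k) (\<lambda>z. z * h z) 0
          = (\<Sum>i = 0..k. of_nat (k choose i) * (deriv ^^ i) (\<lambda>z. z) 0 * (deriv ^^ (k - i)) h 0)"
    using assms by (intro higher_deriv_mult_at) auto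
  also have "\<dots> = (\<Sum>i \<in> {0..k}. if i = 1 then of_nat k * (deriv ^^ j) h 0 else 0)"
    using Suc by (intro sum.cong) auto
  finally show ?thesis
    using Suc by simp
qed simp

lemma rh_operator_Taylor_coeff:
  assumes g: "g analytic_on {0}"
  shows "(deriv ^^ k) (rh_operator \<gamma> \<delta> g) 0 / fact k
           = of_real (rh_weight \<gamma> \<delta> (Suc k)) * ((deriv ^^ Suc k) g 0 / fact (Suc k))"
proof -
  have "rh_operator \<gamma> \<delta> g = (\<lambda>z. of_real \<gamma> * (deriv ^^ 1) g z
          + (of_real \<delta> * (z * (deriv ^^ 2) g z)
             + of_real ((\<delta> - \<gamma>) / 2) * (z * (z * (deriv ^^ 3) g z))))"
    by (auto simp: fun_eq_iff rh_operator_def power2_eq_square mult_ac)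
  then have "(deriv ^^ k) (rh_operator \<gamma> \<delta> g) 0
      = of_real \<gamma> * (deriv ^^ k) ((deriv ^^ 1) g) 0
        + (of_real \<delta> * (of_nat k * (deriv ^^ (k - 1)) ((deriv ^^ 2) g) 0)
           + of_real ((\<delta> - \<gamma>) / 2) * (of_nat k * (of_nat (k - 1) * (deriv ^^ (k - 2)) ((deriv ^^ 3) g) 0)))"
    using g
    by (simp add: higher_deriv_add_at higher_deriv_cmult' higher_deriv_id_mult_0 analytic_intros
        numeral_2_eq_2 del: funpow.simps of_real_divide of_real_diff)
  also have "\<dots> = of_real (\<gamma> + k * \<delta> + k * (real k - 1) * (\<delta> - \<gamma>) / 2) * (deriv ^^ Suc k) g 0"
  proof -
    have iterate: "(deriv ^^ i) ((deriv ^^ j) g) = (deriv ^^ (i + j)) g" for i j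
      by (simp add: funpow_add)
    consider "k = 0" | "k = 1" | j where "k = Suc (Suc j)"
      by (metis One_nat_def not0_implies_Suc)
    then show ?thesis
      by cases (simp_all add: iterate numeral_3_eq_3 field_simps del: funpow.simps)
  qed
  finally have at_zero: "(deriv ^^ k) (rh_operator \<gamma> \<delta> g) 0
      = of_real (\<gamma> + k * \<delta> + k * (real k - 1) * (\<delta> - \<gamma>) / 2) * (deriv ^^ Suc k) g 0" .
  moreover have "rh_weight \<gamma> \<delta> (Suc k) = Suc k * (\<gamma> + k * \<delta> + k * (real k - 1) * (\<delta> - \<gamma>) / 2)"
    by (simp add: rh_weight_def algebra_simps)
  ultimately show ?thesis
    by (simp add: fact_Suc del: funpow.simps of_nat_Suc)
qed

lemma rh_operator_holomorphic:
  assumes "g holomorphic_on S" "open S"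
  shows "rh_operator \<gamma> \<delta> g holomorphic_on S"
  unfolding rh_operator_def[abs_def] using assms
  by (intro holomorphic_intros holomorphic_higher_deriv holomorphic_deriv)

lemma rh_weight_ge:
  assumes "0 \<le> \<gamma>" "\<gamma> \<le> \<delta>" "2 \<le> m"
  shows "2 * (\<gamma> + \<delta>) \<le> rh_weight \<gamma> \<delta> m"
proof -
  have "1 * \<delta> \<le> (real m - 1) * \<delta>"
    using assms by (intro mult_right_mono) auto
  moreover have "0 \<le> (real m - 1) * (real m - 2) * (\<delta> - \<gamma>) / 2"
    using assms by simp
  ultimately have "\<gamma> + \<delta> \<le> \<gamma> + (real m - 1) * \<delta> + (real m - 1) * (real m - 2) * (\<delta> - \<gamma>) / 2"
    by linarith
  then show ?thesis
    unfolding rh_weight_def using assms by (intro mult_mono) auto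
qed

lemma RH0_weighted_coeff_bound:
  assumes RH: "in_RH0 \<gamma> \<delta> lam s t" and m: "2 \<le> m"
  shows "\<bar>rh_weight \<gamma> \<delta> m\<bar> * (norm ((deriv ^^ m) s 0 / fact m) + norm ((deriv ^^ m) t 0 / fact m))
           \<le> 2 * (\<gamma> - lam)"
proof -
  have s: "s holomorphic_on ball 0 1" "deriv s 0 = 1" and t: "t holomorphic_on ball 0 1" "deriv t 0 = 0"
    and dominated: "\<And>z. z \<in> ball 0 1 \<Longrightarrow>
                      norm (rh_operator \<gamma> \<delta> t z) < Re (rh_operator \<gamma> \<delta> s z - lam)"
    using RH unfolding in_RH0_def rh_operator_def by auto
  define A where "A z = rh_operator \<gamma> \<delta> s z - lam" for z
  define n where "n = m - 1"
  have n: "n \<ge> 1" "Suc n = m"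
    using m by (auto simp: n_def)
  have hol: "A holomorphic_on ball 0 1" "rh_operator \<gamma> \<delta> t holomorphic_on ball 0 1"
    unfolding A_def using s t by (auto intro!: holomorphic_intros rh_operator_holomorphic)
  have "rh_operator \<gamma> \<delta> t 0 = 0"
    using t by (simp add: rh_operator_def)
  from Caratheodory_coeff_bound_pair[OF hol this dominated[folded A_def] n(1)]
  have "norm ((deriv ^^ n) A 0 / fact n) + norm ((deriv ^^ n) (rh_operator \<gamma> \<delta> t) 0 / fact n)
          \<le> 2 * Re (A 0)" .
  moreover have "Re (A 0) = \<gamma> - lam"
    using s by (simp add: A_def rh_operator_def)
  moreover have "(deriv ^^ n) A 0 = (deriv ^^ n) (rh_operator \<gamma> \<delta> s) 0"
    unfolding A_def using hol n
    by (subst higher_deriv_diff[of _ "ball 0 1"]) (auto simp: rh_operator_holomorphic s)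
  moreover have "s analytic_on {0}" "t analytic_on {0}"
    using s t by (auto intro: holomorphic_on_imp_analytic_at)
  ultimately show ?thesis
    using n by (simp add: rh_operator_Taylor_coeff norm_mult distrib_left
                  del: funpow.simps times_divide_eq_right)
qed

lemma RH0_coeff_bound:
  assumes "0 \<le> lam" "lam < \<gamma>" "\<gamma> \<le> \<delta>" and RH: "in_RH0 \<gamma> \<delta> lam s t" and m: "2 \<le> m"
  shows "norm ((deriv ^^ m) s 0 / fact m) + norm ((deriv ^^ m) t 0 / fact m) \<le> (\<gamma> - lam) / (\<gamma> + \<delta>)"
proof -
  have "2 * (\<gamma> + \<delta>) \<le> rh_weight \<gamma> \<delta> m"
    using assms by (intro rh_weight_ge) auto
  then have "2 * (\<gamma> + \<delta>) * (norm ((deriv ^^ m) s 0 / fact m) + norm ((deriv ^^ m) t 0 / fact m))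
               \<le> 2 * (\<gamma> - lam)"
    using RH0_weighted_coeff_bound[OF RH m] assms
    by (smt (verit) add_nonneg_nonneg mult_right_mono norm_ge_zero)
  then show ?thesis
    using assms by (simp add: field_simps)
qed

section \<open>Positivity of f/z and Df/f on circles\<close>

lemma Re_pos_of_norm_diff_less:
  fixes w :: complex
  assumes "norm (w - 1) < norm (w + 1)"
  shows "0 < Re w"
proof -
  have "norm (w - 1) ^ 2 < norm (w + 1) ^ 2"
    using assms by (intro power_strict_mono) auto
  then have "(Re w - 1)^2 + (Im w)^2 < (Re w + 1)^2 + (Im w)^2"
    using cmod_power2[of "w - 1"] cmod_power2[of "w + 1"] by simp
  then show ?thesis
    by (simp add: power2_eq_square algebra_simps)
qed

lemma starlike_conditions_of_estimate:
  fixes F G z :: complex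
  assumes est: "norm (G + F - 2 * z) + norm (G - F) < 2 * norm z"
  shows "0 < Re (F / z)" and "0 < Re (G / F)"
proof -
  have "0 < norm z"
    using est norm_ge_zero[of "G + F - 2 * z"] norm_ge_zero[of "G - F"] by linarith
  then have z: "z \<noteq> 0"
    by auto
  have "F - z = ((G + F - 2 * z) - (G - F)) / 2"
    by (simp add: field_simps)
  then have "norm (F - z) = norm ((G + F - 2 * z) - (G - F)) / 2"
    by (simp only: norm_divide) simp
  also have "\<dots> < norm z"
    using norm_triangle_ineq4[of "G + F - 2 * z" "G - F"] est by linarith
  finally have "norm (F / z - 1) < 1"
    using z by (simp add: norm_divide divide_simps flip: norm_mult)
  then have "- 1 < Re (F / z - 1)"
    using abs_Re_le_cmod[of "F / z - 1"] by linarith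
  then show F: "0 < Re (F / z)"
    by simp
  then have "F \<noteq> 0"
    by auto
  have "norm (2 * z) \<le> norm (G + F) + norm (G + F - 2 * z)"
    using norm_triangle_ineq4[of "G + F" "G + F - 2 * z"] by simp
  then have "norm (G - F) < norm (G + F)"
    using est by (simp add: norm_mult)
  moreover have "G / F - 1 = (G - F) / F" "G / F + 1 = (G + F) / F"
    using \<open>F \<noteq> 0\<close> by (simp_all add: field_simps)
  ultimately have "norm (G / F - 1) < norm (G / F + 1)"
    using \<open>F \<noteq> 0\<close> by (simp add: norm_divide divide_strict_right_mono)
  then show "0 < Re (G / F)"
    by (rule Re_pos_of_norm_diff_less)
qed

lemma z_times_deriv_sums:
  fixes g :: "complex \<Rightarrow> complex"
  assumes g: "g holomorphic_on ball 0 r" and z: "z \<in> ball 0 r"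
  shows "(\<lambda>n. of_nat n * ((deriv ^^ n) g 0 / fact n) * z ^ n) sums (z * deriv g z)"
proof -
  have "deriv g holomorphic_on ball 0 r"
    using g by (intro holomorphic_deriv) auto
  from holomorphic_power_series[OF this z]
  have "(\<lambda>n. (deriv ^^ Suc n) g 0 / fact n * z ^ n) sums deriv g z"
    by (simp add: funpow_Suc_right del: funpow.simps)
  from sums_mult[OF this, of z]
  have "(\<lambda>n. z * ((deriv ^^ Suc n) g 0 / fact n * z ^ n)) sums (z * deriv g z)" .
  moreover have "of_nat (Suc n) * ((deriv ^^ Suc n) g 0 / fact (Suc n)) * z ^ Suc n
                   = z * ((deriv ^^ Suc n) g 0 / fact n * z ^ n)" for n
  proof -
    have "of_nat (Suc n) * (w / fact (Suc n)) = w / fact n" for w :: complex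
      by (simp add: fact_Suc del: of_nat_Suc)
    then show ?thesis
      by (simp only: power_Suc) (simp add: mult_ac)
  qed
  ultimately have "(\<lambda>n. of_nat (Suc n) * ((deriv ^^ Suc n) g 0 / fact (Suc n)) * z ^ Suc n)
                     sums (z * deriv g z)"
    by simp
  from sums_Suc[OF this] show ?thesis
    by simp
qed

lemma sums_nat_mult_power_ge_2:
  fixes \<rho> :: real
  assumes "\<bar>\<rho>\<bar> < 1"
  shows "(\<lambda>n. if 2 \<le> n then real n * \<rho> ^ n else 0) sums (\<rho> * (1 / (1 - \<rho>)^2 - 1))"
proof -
  have "(\<lambda>n. \<rho> * (of_nat (Suc n) * \<rho> ^ n - (if n = 0 then 1 else 0))) sums (\<rho> * (1 / (1 - \<rho>)^2 - 1))"
    using assms by (intro sums_mult sums_diff geometric_deriv_sums sums_single) simp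
  moreover have "\<rho> * (of_nat (Suc n) * \<rho> ^ n - (if n = 0 then 1 else 0))
                   = (if 2 \<le> Suc n then real (Suc n) * \<rho> ^ Suc n else 0)" for n
    by (cases n) (simp_all add: algebra_simps)
  ultimately have "(\<lambda>n. if 2 \<le> Suc n then real (Suc n) * \<rho> ^ Suc n else 0) sums (\<rho> * (1 / (1 - \<rho>)^2 - 1))"
    by simp
  from sums_Suc[OF this] show ?thesis
    by simp
qed

lemma norm_sums_pair_le:
  fixes X Y :: "nat \<Rightarrow> 'a::banach"
  assumes X: "X sums x" and Y: "Y sums y" and W: "W sums w"
    and bound: "\<And>n. norm (X n) + norm (Y n) \<le> W n"
  shows "norm x + norm y \<le> w"
proof -
  have "norm (X n) \<le> W n" "norm (Y n) \<le> W n" for n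
    using bound[of n] norm_ge_zero[of "X n"] norm_ge_zero[of "Y n"] by linarith+
  then have summable: "summable (\<lambda>n. norm (X n))" "summable (\<lambda>n. norm (Y n))"
    by (auto intro: summable_comparison_test'[OF sums_summable[OF W]])
  have "norm x + norm y \<le> (\<Sum>n. norm (X n)) + (\<Sum>n. norm (Y n))"
    using summable_norm[OF summable(1)] summable_norm[OF summable(2)] sums_unique[OF X] sums_unique[OF Y]
    by simp
  also have "\<dots> = (\<Sum>n. norm (X n) + norm (Y n))"
    using suminf_add[OF summable] .
  also have "\<dots> \<le> w"
    using bound summable W by (intro sums_le[OF _ summable_sums]) (auto intro: summable_add)
  finally show ?thesis .
qed

lemma norm_harmonic_terms_le:
  fixes A B :: complex and n :: nat
  assumes "1 \<le> n"
  shows "norm (of_real (real n + 1) * A - of_real (real n - 1) * B)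
           + norm (of_real (real n - 1) * A - of_real (real n + 1) * B) \<le> 2 * n * (norm A + norm B)"
proof -
  have "norm (of_real (real n + 1) * A - of_real (real n - 1) * B) \<le> (real n + 1) * norm A + (real n - 1) * norm B"
    using norm_triangle_ineq4[of "of_real (real n + 1) * A" "of_real (real n - 1) * B"] assms
    by (simp add: norm_mult del: of_real_add of_real_diff)
  moreover have "norm (of_real (real n - 1) * A - of_real (real n + 1) * B) \<le> (real n - 1) * norm A + (real n + 1) * norm B"
    using norm_triangle_ineq4[of "of_real (real n - 1) * A" "of_real (real n + 1) * B"] assms
    by (simp add: norm_mult del: of_real_add of_real_diff)
  ultimately show ?thesis
    by (simp add: algebra_simps)
qed

lemma harmonic_starlike_estimate:
  fixes s t :: "complex \<Rightarrow> complex" and z :: complex and C :: real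
  assumes s: "s holomorphic_on ball 0 1" "s 0 = 0" "deriv s 0 = 1"
    and t: "t holomorphic_on ball 0 1" "t 0 = 0" "deriv t 0 = 0"
    and coeff: "\<And>n. 2 \<le> n \<Longrightarrow> norm ((deriv ^^ n) s 0 / fact n) + norm ((deriv ^^ n) t 0 / fact n) \<le> C"
    and z: "norm z < 1"
  shows "norm ((z * deriv s z - cnj (z * deriv t z)) + (s z + cnj (t z)) - 2 * z)
         + norm ((z * deriv s z - cnj (z * deriv t z)) - (s z + cnj (t z)))
         \<le> 2 * C * norm z * (1 / (1 - norm z)^2 - 1)"
proof -
  define a where "a n = (deriv ^^ n) s 0 / fact n" for n
  define b where "b n = (deriv ^^ n) t 0 / fact n" for n
  define F where "F = s z + cnj (t z)"
  define G where "G = z * deriv s z - cnj (z * deriv t z)"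
  define X where "X n = (of_nat n * a n * z ^ n - cnj (of_nat n * b n * z ^ n))
                         + (a n * z ^ n + cnj (b n * z ^ n)) - (if n = 1 then 2 * z else 0)" for n
  define Y where "Y n = (of_nat n * a n * z ^ n - cnj (of_nat n * b n * z ^ n))
                         - (a n * z ^ n + cnj (b n * z ^ n))" for n
  define W where "W n = 2 * C * (if 2 \<le> n then real n * norm z ^ n else 0)" for n
  have zb: "z \<in> ball 0 1"
    using z by simp
  have "(\<lambda>n. a n * z ^ n) sums s z" "(\<lambda>n. b n * z ^ n) sums t z"
    unfolding a_def b_def using holomorphic_power_series[OF s(1) zb] holomorphic_power_series[OF t(1) zb]
    by simp_all
  then have "(\<lambda>n. a n * z ^ n + cnj (b n * z ^ n)) sums F"
    unfolding F_def by (intro sums_add sums_cnj[THEN iffD2])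
  moreover have "(\<lambda>n. of_nat n * a n * z ^ n - cnj (of_nat n * b n * z ^ n)) sums G"
    unfolding G_def a_def b_def
    by (intro sums_diff sums_cnj[THEN iffD2] z_times_deriv_sums[OF s(1) zb] z_times_deriv_sums[OF t(1) zb])
  ultimately have "X sums (G + F - 2 * z)" "Y sums (G - F)"
    unfolding X_def Y_def
    by (auto intro!: sums_add sums_diff simp: sums_single[of 1 "\<lambda>_. 2 * z", simplified])
  moreover have "W sums (2 * C * norm z * (1 / (1 - norm z)^2 - 1))"
    unfolding W_def using z sums_mult[OF sums_nat_mult_power_ge_2, of "norm z" "2 * C"]
    by (simp add: mult.assoc)
  moreover have "norm (X n) + norm (Y n) \<le> W n" for n
  proof (cases "2 \<le> n")
    case True
    define A where "A = a n * z ^ n"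
    define B where "B = cnj (b n * z ^ n)"
    have "norm (X n) + norm (Y n) = norm (of_real (real n + 1) * A - of_real (real n - 1) * B)
                                    + norm (of_real (real n - 1) * A - of_real (real n + 1) * B)"
      using True by (simp add: X_def Y_def A_def B_def algebra_simps)
    also have "\<dots> \<le> 2 * n * ((norm (a n) + norm (b n)) * norm z ^ n)"
      using norm_harmonic_terms_le[of n A B] True
      by (simp add: A_def B_def norm_mult norm_power algebra_simps)
    also have "\<dots> \<le> W n"
      using coeff[OF True] True by (simp add: W_def a_def b_def mult_right_mono)
    finally show ?thesis .
  next
    case False
    then have "n = 0 \<or> n = 1"
      by auto
    then show ?thesis
      using s t by (auto simp: W_def X_def Y_def a_def b_def)
  qed
  ultimately show ?thesis
    unfolding F_def G_def by (rule norm_sums_pair_le)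
qed

section \<open>Monotonicity of the argument along circles\<close>

lemma cis_neq_of_less:
  assumes "a < b" "b < a + 2 * pi"
  shows "cis a \<noteq> cis b"
proof
  assume "cis a = cis b"
  then have "sin b = sin a \<and> cos b = cos a"
    by (metis cis.sel)
  then obtain n :: int where "b = a + 2 * pi * n"
    using sin_cos_eq_iff by blast
  with assms have "0 < 2 * pi * n" "2 * pi * n < 2 * pi * 1"
    by auto
  then have "0 < n" "n < 1"
    by (simp_all add: zero_less_mult_iff mult_less_cancel_left_pos del: mult_less_cancel_left1)
  then show False
    by linarith
qed

lemma sgn_eq_cis_arg_branch:
  fixes w :: complex and \<theta> :: real
  assumes "0 < Re (w * cis (- \<theta>))"
  shows "sgn w = cis (\<theta> + Im (Ln (w * cis (- \<theta>))))"
proof -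
  define q where "q = w * cis (- \<theta>)"
  have "q \<noteq> 0"
    using assms by (auto simp: q_def)
  have "w = q * cis \<theta>"
    by (simp add: q_def mult.assoc cis_mult)
  then have "sgn w = sgn q * sgn (cis \<theta>)"
    by (simp only: sgn_mult)
  also have "sgn q = cis (Im (Ln q))"
    using \<open>q \<noteq> 0\<close> by (simp add: Arg_eq_Im_Ln flip: cis_Arg)
  also have "sgn (cis \<theta>) = cis \<theta>"
    by (simp add: sgn_div_norm)
  finally show ?thesis
    by (simp add: q_def cis_mult add.commute)
qed

lemma arg_branch_has_real_derivative:
  fixes F :: "real \<Rightarrow> complex"
  assumes F: "(F has_vector_derivative F') (at \<theta>)" and pos: "0 < Re (F \<theta> * cis (- \<theta>))"
  shows "((\<lambda>\<theta>. \<theta> + Im (Ln (F \<theta> * cis (- \<theta>)))) has_real_derivative Im (F' / F \<theta>)) (at \<theta>)"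
proof -
  have "F \<theta> \<noteq> 0"
    using pos by auto
  have "((\<lambda>\<theta>. cis (- \<theta>)) has_vector_derivative - (\<i> * cis (- \<theta>))) (at \<theta>)"
    unfolding has_vector_derivative_def
    by (rule has_derivative_eq_rhs[OF has_derivative_cis[OF has_derivative_minus[OF has_derivative_ident]]])
       auto
  then have "((\<lambda>\<theta>. F \<theta> * cis (- \<theta>)) has_vector_derivative
               F \<theta> * - (\<i> * cis (- \<theta>)) + F' * cis (- \<theta>)) (at \<theta>)"
    by (rule has_vector_derivative_mult[OF F])
  from field_vector_diff_chain_at[OF this has_field_derivative_Ln]
  have "((\<lambda>\<theta>. Ln (F \<theta> * cis (- \<theta>))) has_vector_derivative
          (F \<theta> * - (\<i> * cis (- \<theta>)) + F' * cis (- \<theta>)) * inverse (F \<theta> * cis (- \<theta>))) (at \<theta>)"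
    using pos by (auto simp: o_def complex_nonpos_Reals_iff)
  moreover have "(F \<theta> * - (\<i> * cis (- \<theta>)) + F' * cis (- \<theta>)) * inverse (F \<theta> * cis (- \<theta>))
                   = F' / F \<theta> - \<i>"
    using \<open>F \<theta> \<noteq> 0\<close> by (simp add: field_simps)
  ultimately have "((\<lambda>\<theta>. Im (Ln (F \<theta> * cis (- \<theta>)))) has_real_derivative Im (F' / F \<theta>) - 1) (at \<theta>)"
    using has_field_derivative_Im by fastforce
  from DERIV_add[OF DERIV_ident this] show ?thesis
    by simp
qed

lemma sgn_neq_of_turning_curve:
  fixes F G :: "real \<Rightarrow> complex"
  assumes deriv: "\<And>\<theta>. (F has_vector_derivative \<i> * G \<theta>) (at \<theta>)"
    and winding: "\<And>\<theta>. 0 < Re (F \<theta> * cis (- \<theta>))"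
    and turning: "\<And>\<theta>. 0 < Re (G \<theta> / F \<theta>)"
    and periodic: "\<And>\<theta>. F (\<theta> + 2 * pi) = F \<theta>"
    and ab: "a < b" "b < a + 2 * pi"
  shows "sgn (F a) \<noteq> sgn (F b)"
proof -
  \<comment> \<open>a continuous branch of \<open>arg F\<close>: by \<open>winding\<close>, \<open>F \<theta> * cis (- \<theta>)\<close> avoids the cut of \<open>Ln\<close>\<close>
  define L where "L \<theta> = \<theta> + Im (Ln (F \<theta> * cis (- \<theta>)))" for \<theta>
  have "(L has_real_derivative Re (G \<theta> / F \<theta>)) (at \<theta>)" for \<theta>
    unfolding L_def[abs_def] using arg_branch_has_real_derivative[OF deriv winding]
    by (simp flip: times_divide_eq_right)
  then have mono: "L x < L y" if "x < y" for x y
    using DERIV_pos_imp_increasing[OF that] turning by blast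
  have "cis (- (a + 2 * pi)) = cis (- a)"
    by (simp only: cis.ctr cos_minus sin_minus cos_periodic sin_periodic)
  then have "L (a + 2 * pi) = L a + 2 * pi"
    using periodic[of a] by (simp add: L_def)
  then have "L a < L b" "L b < L a + 2 * pi"
    using mono[OF ab(1)] mono[OF ab(2)] by simp_all
  moreover have "sgn (F \<theta>) = cis (L \<theta>)" for \<theta>
    unfolding L_def by (rule sgn_eq_cis_arg_branch[OF winding])
  ultimately show ?thesis
    using cis_neq_of_less by auto
qed

lemma inj_on_sphere_of_polar_neq:
  fixes g :: "complex \<Rightarrow> 'a"
  assumes \<rho>: "0 < \<rho>"
    and neq: "\<And>a b. a < b \<Longrightarrow> b < a + 2 * pi \<Longrightarrow> g (\<rho> * cis a) \<noteq> g (\<rho> * cis b)"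
  shows "inj_on g (sphere 0 \<rho>)"
proof (rule inj_onI)
  fix u v
  assume u: "u \<in> sphere 0 \<rho>" and v: "v \<in> sphere 0 \<rho>" and eq: "g u = g v"
  have polar: "w = \<rho> * cis (Arg w)" if "w \<in> sphere 0 \<rho>" for w
  proof -
    have "w \<noteq> 0" "norm w = \<rho>"
      using that \<rho> by auto
    then show ?thesis
      using \<rho> by (simp add: cis_Arg sgn_eq)
  qed
  have "\<not> Arg u < Arg v" "\<not> Arg v < Arg u"
    using neq[of "Arg u" "Arg v"] neq[of "Arg v" "Arg u"] eq polar[OF u] polar[OF v]
      mpi_less_Arg[of u] Arg_le_pi[of u] mpi_less_Arg[of v] Arg_le_pi[of v]
    by auto
  then show "u = v"
    by (subst polar[OF u], subst polar[OF v]) simp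
qed

lemma harmonic_circle_has_vector_derivative:
  fixes s t :: "complex \<Rightarrow> complex" and \<rho> :: real
  assumes s: "s holomorphic_on ball 0 1" and t: "t holomorphic_on ball 0 1" and \<rho>: "0 \<le> \<rho>" "\<rho> < 1"
  shows "((\<lambda>\<theta>. s (\<rho> * cis \<theta>) + cnj (t (\<rho> * cis \<theta>))) has_vector_derivative
           \<i> * (\<rho> * cis \<theta> * deriv s (\<rho> * cis \<theta>) - cnj (\<rho> * cis \<theta> * deriv t (\<rho> * cis \<theta>)))) (at \<theta>)"
proof -
  define z where "z \<theta> = complex_of_real \<rho> * cis \<theta>" for \<theta>
  have "(z has_vector_derivative \<i> * z \<theta>) (at \<theta>)"
    unfolding z_def has_vector_derivative_def
    by (rule has_derivative_eq_rhs[OF has_derivative_mult_right[OF has_derivative_cis[OF has_derivative_ident]]])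
       (auto simp: fun_eq_iff)
  moreover have "z \<theta> \<in> ball 0 1"
    using \<rho> by (simp add: z_def norm_mult)
  ultimately have "((s \<circ> z) has_vector_derivative \<i> * z \<theta> * deriv s (z \<theta>)) (at \<theta>)"
                  "((t \<circ> z) has_vector_derivative \<i> * z \<theta> * deriv t (z \<theta>)) (at \<theta>)"
    using s t by (auto intro!: field_vector_diff_chain_at holomorphic_derivI[of _ "ball 0 1"])
  from has_vector_derivative_add[OF this(1) has_vector_derivative_cnj[OF this(2)]] show ?thesis
    by (simp add: z_def o_def algebra_simps)
qed

lemma harmonic_sgn_inj_on_sphere:
  fixes s t :: "complex \<Rightarrow> complex" and \<rho> :: real
  assumes s: "s holomorphic_on ball 0 1" and t: "t holomorphic_on ball 0 1" and \<rho>: "0 < \<rho>" "\<rho> < 1"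
    and pos: "\<And>z. norm z = \<rho> \<Longrightarrow> 0 < Re ((s z + cnj (t z)) / z) \<and>
                 0 < Re ((z * deriv s z - cnj (z * deriv t z)) / (s z + cnj (t z)))"
  shows "inj_on (\<lambda>z. sgn (s z + cnj (t z))) (sphere 0 \<rho>)"
proof (rule inj_on_sphere_of_polar_neq[OF \<rho>(1)])
  define f where "f z = s z + cnj (t z)" for z
  define G where "G \<theta> = \<rho> * cis \<theta> * deriv s (\<rho> * cis \<theta>) - cnj (\<rho> * cis \<theta> * deriv t (\<rho> * cis \<theta>))" for \<theta>
  have on_circle: "norm (\<rho> * cis \<theta>) = \<rho>" for \<theta>
    using \<rho> by (simp add: norm_mult)
  have deriv: "((\<lambda>\<theta>. f (\<rho> * cis \<theta>)) has_vector_derivative \<i> * G \<theta>) (at \<theta>)" for \<theta>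
    unfolding f_def G_def using \<rho> by (intro harmonic_circle_has_vector_derivative[OF s t]) auto
  have winding: "0 < Re (f (\<rho> * cis \<theta>) * cis (- \<theta>))" for \<theta>
  proof -
    define q where "q = f (\<rho> * cis \<theta>) / (\<rho> * cis \<theta>)"
    have "f (\<rho> * cis \<theta>) * cis (- \<theta>) = \<rho> * q"
      using \<rho> by (simp add: q_def field_simps cis_mult)
    moreover have "0 < Re q"
      using pos[OF on_circle] by (simp add: q_def f_def)
    ultimately show ?thesis
      using \<rho> by simp
  qed
  have turning: "0 < Re (G \<theta> / f (\<rho> * cis \<theta>))" for \<theta>
    using pos[OF on_circle] by (simp add: f_def G_def)
  have periodic: "f (\<rho> * cis (\<theta> + 2 * pi)) = f (\<rho> * cis \<theta>)" for \<theta>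
    by (simp only: cis.ctr cos_periodic sin_periodic)
  show "sgn (s (\<rho> * cis a) + cnj (t (\<rho> * cis a))) \<noteq> sgn (s (\<rho> * cis b) + cnj (t (\<rho> * cis b)))"
    if "a < b" "b < a + 2 * pi" for a b
    using sgn_neq_of_turning_curve[OF deriv winding turning periodic that] by (simp add: f_def)
qed

section \<open>Starlike domains bounded by a curve met once by every ray\<close>

definition radial_extension :: "real \<Rightarrow> (complex \<Rightarrow> complex) \<Rightarrow> complex \<Rightarrow> complex" where
  "radial_extension \<rho> f v = of_real (norm v) * f (of_real \<rho> * sgn v)"

lemma radial_extension_scale:
  assumes "0 \<le> c"
  shows "radial_extension \<rho> f (of_real c * v) = of_real c * radial_extension \<rho> f v"
  using assms by (cases "c = 0") (auto simp: radial_extension_def norm_mult sgn_mult sgn_of_real)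

lemma radial_extension_sphere:
  assumes "0 < \<rho>"
  shows "radial_extension \<rho> f ` sphere 0 1 = f ` sphere 0 \<rho>"
proof -
  have "radial_extension \<rho> f u = f (of_real \<rho> * u)" if "u \<in> sphere 0 1" for u
    using that by (simp add: radial_extension_def sgn_eq)
  moreover have "(\<lambda>u. of_real \<rho> * u) ` sphere 0 1 = sphere (0::complex) \<rho>"
  proof -
    have "(\<lambda>u. of_real \<rho> * u) = (\<lambda>u::complex. \<rho> *\<^sub>R u)"
      by (simp add: fun_eq_iff scaleR_conv_of_real)
    then show ?thesis
      using sphere_scale[of \<rho> 0 1] assms by simp
  qed
  ultimately show ?thesis
    by (metis (no_types, lifting) image_cong image_image)
qed

lemma radial_extension_continuous:
  assumes f: "continuous_on (sphere 0 \<rho>) f" and \<rho>: "0 < \<rho>"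
  shows "continuous_on UNIV (radial_extension \<rho> f)"
proof -
  have on_sphere: "of_real \<rho> * sgn v \<in> sphere 0 \<rho>" if "v \<noteq> 0" for v :: complex
    using that \<rho> by (simp add: norm_mult norm_sgn)
  have "continuous_on (- {0}) (\<lambda>v. f (of_real \<rho> * sgn v))"
    by (rule continuous_on_compose2[OF f]) (auto intro!: continuous_intros on_sphere)
  then have "continuous_on (- {0}) (radial_extension \<rho> f)"
    unfolding radial_extension_def[abs_def] by (intro continuous_intros)
  then have away: "isCont (radial_extension \<rho> f) v" if "v \<noteq> 0" for v
    using that by (simp add: continuous_on_eq_continuous_at open_Compl)
  obtain M where M: "\<And>y. y \<in> f ` sphere 0 \<rho> \<Longrightarrow> norm y \<le> M"
    using compact_imp_bounded[OF compact_continuous_image[OF f compact_sphere]]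
    by (auto simp: bounded_iff)
  have bound: "norm (radial_extension \<rho> f v) \<le> norm v * M" for v
  proof (cases "v = 0")
    case False
    then have "norm (f (of_real \<rho> * sgn v)) \<le> M"
      using M on_sphere by blast
    then show ?thesis
      by (simp add: radial_extension_def norm_mult mult_left_mono)
  qed (simp add: radial_extension_def)
  have "((\<lambda>v. norm v * M) \<longlongrightarrow> 0) (at (0::complex))"
    by (intro tendsto_mult_left_zero tendsto_norm_zero tendsto_ident_at)
  then have "(radial_extension \<rho> f \<longlongrightarrow> 0) (at 0)"
    by (rule Lim_null_comparison[rotated]) (simp add: bound)
  then have "isCont (radial_extension \<rho> f) 0"
    by (simp add: isCont_def radial_extension_def)
  then show ?thesis
    using away by (metis continuous_at_imp_continuous_on)
qed

lemma radial_extension_inj: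
  assumes \<rho>: "0 < \<rho>" and nonzero: "\<And>z. z \<in> sphere 0 \<rho> \<Longrightarrow> f z \<noteq> 0"
    and inj: "inj_on (sgn \<circ> f) (sphere 0 \<rho>)"
  shows "inj (radial_extension \<rho> f)"
proof (rule injI)
  fix v w
  assume eq: "radial_extension \<rho> f v = radial_extension \<rho> f w"
  have on_sphere: "of_real \<rho> * sgn v \<in> sphere 0 \<rho>" if "v \<noteq> 0" for v :: complex
    using that \<rho> by (simp add: norm_mult norm_sgn)
  have zero: "radial_extension \<rho> f v = 0 \<longleftrightarrow> v = 0" for v
    using nonzero[OF on_sphere] by (auto simp: radial_extension_def)
  show "v = w"
  proof (cases "v = 0 \<or> w = 0")
    case True
    then show ?thesis
      using eq zero by metis
  next
    case False
    have "sgn (radial_extension \<rho> f x) = sgn (f (of_real \<rho> * sgn x))" if "x \<noteq> 0" for x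
      using that by (simp add: radial_extension_def sgn_mult sgn_of_real)
    then have "(sgn \<circ> f) (of_real \<rho> * sgn v) = (sgn \<circ> f) (of_real \<rho> * sgn w)"
      using eq False by (metis comp_apply)
    then have sgn: "sgn v = sgn w"
      using inj_onD[OF inj _ on_sphere on_sphere] False \<rho> by auto
    then have "norm v * norm (f (of_real \<rho> * sgn v)) = norm w * norm (f (of_real \<rho> * sgn v))"
      using arg_cong[OF eq, of norm] by (simp add: radial_extension_def norm_mult)
    then have "norm v = norm w"
      using nonzero[OF on_sphere] False by simp
    moreover have "v = of_real (norm v) * sgn v" "w = of_real (norm w) * sgn w"
      using False by (simp_all add: sgn_eq)
    ultimately show ?thesis
      using sgn by metis
  qed
qed

lemma frontier_image_ball_of_inj:
  fixes \<Psi> :: "'a::euclidean_space \<Rightarrow> 'a"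
  assumes cont: "continuous_on UNIV \<Psi>" and "inj \<Psi>" and "0 < r"
  shows "frontier (\<Psi> ` ball a r) = \<Psi> ` sphere a r"
proof -
  have "open (\<Psi> ` ball a r)"
    using assms by (intro invariance_of_domain_ball) (auto intro: continuous_on_subset inj_on_subset)
  have compact: "compact (\<Psi> ` cball a r)"
    by (rule compact_continuous_image[OF continuous_on_subset[OF cont] compact_cball]) simp
  have "closure (\<Psi> ` ball a r) = \<Psi> ` cball a r"
  proof
    show "closure (\<Psi> ` ball a r) \<subseteq> \<Psi> ` cball a r"
      by (rule closure_minimal[OF image_mono[OF ball_subset_cball] compact_imp_closed[OF compact]])
    have "\<Psi> ` closure (ball a r) \<subseteq> closure (\<Psi> ` ball a r)"
      by (rule image_closure_subset[OF continuous_on_subset[OF cont] closed_closure closure_subset]) simp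
    then show "\<Psi> ` cball a r \<subseteq> closure (\<Psi> ` ball a r)"
      using \<open>0 < r\<close> by simp
  qed
  then show ?thesis
    using interior_open[OF \<open>open (\<Psi> ` ball a r)\<close>] \<open>inj \<Psi>\<close>
    by (simp add: frontier_def cball_diff_eq_sphere flip: image_set_diff)
qed

lemma starlike_domain_of_sgn_inj:
  fixes f :: "complex \<Rightarrow> complex"
  assumes \<rho>: "0 < \<rho>" and f: "continuous_on (sphere 0 \<rho>) f"
    and nonzero: "\<And>z. z \<in> sphere 0 \<rho> \<Longrightarrow> f z \<noteq> 0"
    and inj: "inj_on (sgn \<circ> f) (sphere 0 \<rho>)"
  shows "\<exists>D. open D \<and> connected D \<and> bounded D \<and> frontier D = f ` sphere 0 \<rho> \<and>
             0 \<in> D \<and> (\<forall>w\<in>D. closed_segment 0 w \<subseteq> D)"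
proof (intro exI conjI ballI)
  define \<Psi> where "\<Psi> = radial_extension \<rho> f"
  define D where "D = \<Psi> ` ball 0 1"
  have cont: "continuous_on UNIV \<Psi>"
    unfolding \<Psi>_def using f \<rho> by (rule radial_extension_continuous)
  have "inj \<Psi>"
    unfolding \<Psi>_def using \<rho> nonzero inj by (rule radial_extension_inj)
  show "open D"
    unfolding D_def using cont \<open>inj \<Psi>\<close>
    by (intro invariance_of_domain_ball) (auto intro: continuous_on_subset inj_on_subset)
  show "connected D"
    unfolding D_def by (rule connected_continuous_image[OF continuous_on_subset[OF cont] connected_ball]) simp
  have "compact (\<Psi> ` cball 0 1)"
    by (rule compact_continuous_image[OF continuous_on_subset[OF cont] compact_cball]) simp
  then show "bounded D"
    unfolding D_def by (rule bounded_subset[OF compact_imp_bounded]) (rule image_mono[OF ball_subset_cball])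
  show "frontier D = f ` sphere 0 \<rho>"
    unfolding D_def \<Psi>_def
    using frontier_image_ball_of_inj[OF cont[unfolded \<Psi>_def] \<open>inj \<Psi>\<close>[unfolded \<Psi>_def]]
      radial_extension_sphere[OF \<rho>] by simp
  have "\<Psi> 0 = 0"
    by (simp add: \<Psi>_def radial_extension_def)
  then show "0 \<in> D"
    unfolding D_def by (metis centre_in_ball image_eqI zero_less_one)
  fix w
  assume "w \<in> D"
  then obtain v where v: "norm v < 1" "w = \<Psi> v"
    by (auto simp: D_def)
  show "closed_segment 0 w \<subseteq> D"
  proof
    fix x
    assume "x \<in> closed_segment 0 w"
    then obtain c where c: "0 \<le> c" "c \<le> 1" "x = of_real c * w"
      by (auto simp: closed_segment_def scaleR_conv_of_real)
    then have "x = \<Psi> (of_real c * v)"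
      using v by (simp add: \<Psi>_def radial_extension_scale)
    moreover have "norm (of_real c * v) < 1"
      using c v mult_right_mono[of c 1 "norm v"] by (simp add: norm_mult)
    ultimately show "x \<in> D"
      by (auto simp: D_def)
  qed
qed

lemma RH0_starlike_conditions:
  assumes params: "0 \<le> lam" "lam < \<gamma>" "\<gamma> \<le> \<delta>" and RH: "in_RH0 \<gamma> \<delta> lam s t"
    and cond: "(\<gamma> - lam) / (\<gamma> + \<delta>) * (1 / (1 - \<rho>)^2 - 1) < 1"
    and z: "norm z = \<rho>" "0 < \<rho>" "\<rho> < 1"
  shows "0 < Re ((s z + cnj (t z)) / z) \<and> 0 < Re ((z * deriv s z - cnj (z * deriv t z)) / (s z + cnj (t z)))"
proof -
  define C where "C = (\<gamma> - lam) / (\<gamma> + \<delta>)"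
  define X where "X = 1 / (1 - \<rho>)^2 - 1"
  have "norm ((z * deriv s z - cnj (z * deriv t z)) + (s z + cnj (t z)) - 2 * z)
         + norm ((z * deriv s z - cnj (z * deriv t z)) - (s z + cnj (t z))) \<le> 2 * C * \<rho> * X"
    using RH z RH0_coeff_bound[OF params RH] unfolding in_RH0_def C_def X_def
    by (intro harmonic_starlike_estimate[where z = z, simplified z(1)]) auto
  also have "\<dots> = 2 * norm z * (C * X)"
    using z by simp
  also have "\<dots> < 2 * norm z"
    using cond z unfolding C_def[symmetric] X_def[symmetric] by simp
  finally show ?thesis
    using starlike_conditions_of_estimate by blast
qed

section \<open>The radius of full starlikeness\<close>

lemma quadratic_root_in_unit_interval:
  fixes \<gamma> \<delta> lam r :: real
  assumes "0 \<le> lam" "lam < \<gamma>" "\<gamma> \<le> \<delta>"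
  shows "0 < r \<and> r < 1 \<and> (\<delta> + 2*\<gamma> - lam) * r^2 + (-2*\<delta> - 4*\<gamma> + 2*lam) * r + \<delta> + \<gamma> = 0
           \<longleftrightarrow> r = 1 - sqrt ((\<gamma> - lam) / (\<delta> + 2 * \<gamma> - lam))"
proof -
  define A where "A = \<delta> + 2 * \<gamma> - lam"
  define q where "q = (\<gamma> - lam) / A"
  have "0 < A" "0 < q" "q < 1"
    using assms by (auto simp: A_def q_def field_simps)
  have "(\<delta> + 2*\<gamma> - lam) * r^2 + (-2*\<delta> - 4*\<gamma> + 2*lam) * r + \<delta> + \<gamma> = A * ((1 - r)^2 - q)"
    using \<open>0 < A\<close> by (simp add: A_def q_def power2_eq_square field_simps)
  moreover have "(1 - r)^2 = q \<longleftrightarrow> sqrt q = 1 - r" if "r < 1"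
  proof
    assume "(1 - r)^2 = q"
    then show "sqrt q = 1 - r"
      using that by (auto intro: real_sqrt_unique)
  next
    assume "sqrt q = 1 - r"
    then show "(1 - r)^2 = q"
      using \<open>0 < q\<close> by (metis less_imp_le real_sqrt_pow2)
  qed
  ultimately have "0 < r \<and> r < 1 \<and> (\<delta> + 2*\<gamma> - lam) * r^2 + (-2*\<delta> - 4*\<gamma> + 2*lam) * r + \<delta> + \<gamma> = 0
               \<longleftrightarrow> 0 < r \<and> r < 1 \<and> sqrt q = 1 - r"
    using \<open>0 < A\<close> by auto
  also have "\<dots> \<longleftrightarrow> r = 1 - sqrt q"
    using \<open>0 < q\<close> \<open>q < 1\<close> by auto
  finally show ?thesis
    by (simp add: q_def A_def)
qed

lemma radius_condition_below_root:
  fixes \<gamma> \<delta> lam \<rho> :: real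
  assumes "0 \<le> lam" "lam < \<gamma>" "\<gamma> \<le> \<delta>"
    and \<rho>: "0 < \<rho>" "\<rho> < 1 - sqrt ((\<gamma> - lam) / (\<delta> + 2 * \<gamma> - lam))"
  shows "(\<gamma> - lam) / (\<gamma> + \<delta>) * (1 / (1 - \<rho>)^2 - 1) < 1"
proof -
  define C where "C = (\<gamma> - lam) / (\<gamma> + \<delta>)"
  have "0 < C" "0 < \<gamma> + \<delta>" "0 < \<delta> + 2 * \<gamma> - lam"
    using assms by (auto simp: C_def)
  have "1 + C = (\<delta> + 2 * \<gamma> - lam) / (\<gamma> + \<delta>)"
    using \<open>0 < \<gamma> + \<delta>\<close> by (simp add: C_def field_simps)
  then have "(\<gamma> - lam) / (\<delta> + 2 * \<gamma> - lam) = C / (1 + C)"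
    using \<open>0 < \<gamma> + \<delta>\<close> by (simp add: C_def)
  then have "sqrt (C / (1 + C)) ^ 2 < (1 - \<rho>) ^ 2"
    using \<rho> \<open>0 < C\<close> by (intro power_strict_mono) auto
  then have "C / (1 + C) < (1 - \<rho>)^2"
    using \<open>0 < C\<close> by simp
  moreover have "0 < 1 + C"
    using \<open>0 < C\<close> by simp
  ultimately have "C < (1 - \<rho>)^2 * (1 + C)"
    by (simp add: pos_divide_less_eq)
  moreover have "0 < (1 - \<rho>)^2"
    using \<open>0 < C\<close> \<open>C / (1 + C) < _\<close> \<open>0 < 1 + C\<close> by (meson divide_pos_pos less_trans)
  ultimately have "C / (1 - \<rho>)^2 < 1 + C"
    by (simp add: divide_less_eq mult.commute)
  then show ?thesis
    unfolding C_def[symmetric] by (simp add: right_diff_distrib)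
qed

lemma RH0_starlike_on_circle:
  assumes params: "0 \<le> lam" "lam < \<gamma>" "\<gamma> \<le> \<delta>" and RH: "in_RH0 \<gamma> \<delta> lam s t"
    and \<rho>: "0 < \<rho>" "\<rho> < 1" and cond: "(\<gamma> - lam) / (\<gamma> + \<delta>) * (1 / (1 - \<rho>)^2 - 1) < 1"
  shows "inj_on (\<lambda>z. s z + cnj (t z)) (sphere 0 \<rho>) \<and>
         (\<exists>D. open D \<and> connected D \<and> bounded D \<and> frontier D = (\<lambda>z. s z + cnj (t z)) ` sphere 0 \<rho> \<and>
              0 \<in> D \<and> (\<forall>w\<in>D. closed_segment 0 w \<subseteq> D))"
proof
  have s: "s holomorphic_on ball 0 1" and t: "t holomorphic_on ball 0 1"
    using RH by (auto simp: in_RH0_def)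
  have pos: "0 < Re ((s z + cnj (t z)) / z) \<and> 0 < Re ((z * deriv s z - cnj (z * deriv t z)) / (s z + cnj (t z)))"
    if "norm z = \<rho>" for z
    using RH0_starlike_conditions[OF params RH cond that \<rho>] .
  have sgn_inj: "inj_on (sgn \<circ> (\<lambda>z. s z + cnj (t z))) (sphere 0 \<rho>)"
    using harmonic_sgn_inj_on_sphere[OF s t \<rho> pos] by (simp add: comp_def)
  then show "inj_on (\<lambda>z. s z + cnj (t z)) (sphere 0 \<rho>)"
    by (rule inj_on_imageI2)
  have "continuous_on (sphere 0 \<rho>) (\<lambda>z. s z + cnj (t z))"
    using s t \<rho> by (intro continuous_intros holomorphic_on_imp_continuous_on; auto intro: holomorphic_on_subset)
  moreover have "s z + cnj (t z) \<noteq> 0" if "z \<in> sphere 0 \<rho>" for z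
    using pos[of z] that by auto
  ultimately show "\<exists>D. open D \<and> connected D \<and> bounded D \<and> frontier D = (\<lambda>z. s z + cnj (t z)) ` sphere 0 \<rho> \<and>
                      0 \<in> D \<and> (\<forall>w\<in>D. closed_segment 0 w \<subseteq> D)"
    using starlike_domain_of_sgn_inj[OF \<rho>(1) _ _ sgn_inj] by blast
qed

theorem theorem22:
  fixes \<gamma> \<delta> lam :: real and s t :: "complex \<Rightarrow> complex" and ps :: "real \<Rightarrow> real"
  assumes "0 \<le> lam" "lam < \<gamma>" "\<gamma> \<le> \<delta>"
    and "in_RH0 \<gamma> \<delta> lam s t"
    and "\<And>r. ps r = (\<delta> + 2*\<gamma> - lam) * r^2 + (-2*\<delta> - 4*\<gamma> + 2*lam) * r + \<delta> + \<gamma>"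
  shows "(\<exists>!r. 0 < r \<and> r < 1 \<and> ps r = 0) \<and>
         (\<forall>r. 0 < r \<and> r < 1 \<and> ps r = 0 \<longrightarrow> fully_starlike_in (\<lambda>z. s z + cnj (t z)) r)"
proof -
  define r\<^sub>s where "r\<^sub>s = 1 - sqrt ((\<gamma> - lam) / (\<delta> + 2 * \<gamma> - lam))"
  have root: "0 < r \<and> r < 1 \<and> ps r = 0 \<longleftrightarrow> r = r\<^sub>s" for r
    unfolding r\<^sub>s_def assms(5) by (rule quadratic_root_in_unit_interval[OF assms(1-3)])
  have "inj_on (\<lambda>z. s z + cnj (t z)) (sphere 0 \<rho>) \<and>
        (\<exists>D. open D \<and> connected D \<and> bounded D \<and> frontier D = (\<lambda>z. s z + cnj (t z)) ` sphere 0 \<rho> \<and>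
             0 \<in> D \<and> (\<forall>w\<in>D. closed_segment 0 w \<subseteq> D))" if "0 < \<rho>" "\<rho> < r\<^sub>s" for \<rho>
  proof (rule RH0_starlike_on_circle[OF assms(1-4) that(1)])
    show "\<rho> < 1"
      using that root[of r\<^sub>s] by simp
    show "(\<gamma> - lam) / (\<gamma> + \<delta>) * (1 / (1 - \<rho>)^2 - 1) < 1"
      using radius_condition_below_root[OF assms(1-3)] that unfolding r\<^sub>s_def by blast
  qed
  moreover have "s 0 + cnj (t 0) = 0"
    using assms(4) by (simp add: in_RH0_def)
  ultimately have "fully_starlike_in (\<lambda>z. s z + cnj (t z)) r\<^sub>s"
    by (simp add: fully_starlike_in_def)
  then show ?thesis
    using root by auto
qed

end
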